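(* Let $H_1,H_2$ be complex Hilbert spaces and let $T$ be a densely defined closed operator from $H_1$ to $H_2$ which is bounded below (i.e. there is $c>0$ with $\|Tx\|\geq c\|x\|$ for all $x\in D(T)$). Then for every $\epsilon>0$ there exists a densely defined closed minimum attaining operator $\tilde T$ from $H_1$ to $H_2$ such that $\theta(T,\tilde T)\leq\epsilon$.
   Context: Hilbert spaces are complex and infinite dimensional. For a densely defined closed operator $A$ with domain $D(A)$, $m(A)=\inf\{\|Ax\|: x\in D(A),\ \|x\|=1\}$, and $A$ is minimum attaining if there exists $x_0\in D(A)$, $\|x_0\|=1$, with $\|Ax_0\|=m(A)$. The gap between densely defined closed operators is $\theta(A,B)=\|P_{G(A)}-P_{G(B)}\|$, where $G(A)=\{(Ax,x):x\in D(A)\}$ and $P_M$ is the orthogonal projection onto $M$. *)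

theory Defs
  imports "HOL-Analysis.Analysis"
begin

text \<open>HOL-Analysis has no complex vector spaces, so the
standard axioms are spelled out as a type class.\<close>

class chilbert_space = banach +
  fixes scaleC :: "complex \<Rightarrow> 'a \<Rightarrow> 'a" (infixr \<open>*\<^sub>C\<close> 75)
    and cinner :: "'a \<Rightarrow> 'a \<Rightarrow> complex"
  assumes scaleC_add_right: "a *\<^sub>C (x + y) = a *\<^sub>C x + a *\<^sub>C y"
    and scaleC_add_left: "(a + b) *\<^sub>C x = a *\<^sub>C x + b *\<^sub>C x"
    and scaleC_scaleC: "a *\<^sub>C (b *\<^sub>C x) = (a * b) *\<^sub>C x"
    and scaleC_one: "1 *\<^sub>C x = x"
    and scaleR_scaleC: "scaleR r x = complex_of_real r *\<^sub>C x"
    and cinner_add_left: "cinner (x + y) z = cinner x z + cinner y z"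
    and cinner_scaleC_left: "cinner (a *\<^sub>C x) y = cnj a * cinner x y"
    and cinner_commute: "cinner x y = cnj (cinner y x)"
    and cinner_ge_zero: "0 \<le> Re (cinner x x)"
    and norm_eq_sqrt_cinner: "norm x = sqrt (Re (cinner x x))"

definition cspan :: "'a::chilbert_space set \<Rightarrow> 'a set" where
  "cspan B = {\<Sum>b\<in>F. c b *\<^sub>C b | F c. finite F \<and> F \<subseteq> B}"

definition infinite_dimensional :: "'a::chilbert_space itself \<Rightarrow> bool" where
  "infinite_dimensional _ \<longleftrightarrow> \<not> (\<exists>B::'a set. finite B \<and> cspan B = UNIV)"

definition csubspace :: "'a::chilbert_space set \<Rightarrow> bool" where
  "csubspace S \<longleftrightarrow> 0 \<in> S \<and> (\<forall>x\<in>S. \<forall>y\<in>S. x + y \<in> S) \<and> (\<forall>c. \<forall>x\<in>S. c *\<^sub>C x \<in> S)"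

text \<open>An (unbounded) operator from H1 to H2 is represented by its domain \<open>D\<close> and a function
\<open>T\<close> whose values outside \<open>D\<close> are irrelevant.\<close>

definition graph :: "'a::chilbert_space set \<Rightarrow> ('a \<Rightarrow> 'b::chilbert_space) \<Rightarrow> ('b \<times> 'a) set" where
  "graph D T = {(T x, x) | x. x \<in> D}"

definition densely_defined_closed ::
    "'a::chilbert_space set \<Rightarrow> ('a \<Rightarrow> 'b::chilbert_space) \<Rightarrow> bool" where
  "densely_defined_closed D T \<longleftrightarrow>
     csubspace D \<and> closure D = UNIV \<and>
     (\<forall>x\<in>D. \<forall>y\<in>D. T (x + y) = T x + T y) \<and>
     (\<forall>c. \<forall>x\<in>D. T (c *\<^sub>C x) = c *\<^sub>C T x) \<and>
     closed (graph D T)"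

definition bounded_below :: "'a::chilbert_space set \<Rightarrow> ('a \<Rightarrow> 'b::chilbert_space) \<Rightarrow> bool" where
  "bounded_below D T \<longleftrightarrow> (\<exists>c>0. \<forall>x\<in>D. norm (T x) \<ge> c * norm x)"

definition min_modulus :: "'a::chilbert_space set \<Rightarrow> ('a \<Rightarrow> 'b::chilbert_space) \<Rightarrow> real" where
  "min_modulus D T = Inf ((\<lambda>x. norm (T x)) ` {x\<in>D. norm x = 1})"

definition minimum_attaining :: "'a::chilbert_space set \<Rightarrow> ('a \<Rightarrow> 'b::chilbert_space) \<Rightarrow> bool" where
  "minimum_attaining D T \<longleftrightarrow> (\<exists>x0\<in>D. norm x0 = 1 \<and> norm (T x0) = min_modulus D T)"

text \<open>The Hilbert space \<open>H2 \<oplus> H1\<close>: inner product of the direct sum (its induced norm is the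
library product norm \<open>sqrt (\<parallel>u\<parallel>^2 + \<parallel>v\<parallel>^2)\<close>).\<close>

definition pinner :: "'b::chilbert_space \<times> 'a::chilbert_space \<Rightarrow> 'b \<times> 'a \<Rightarrow> complex" where
  "pinner z w = cinner (fst z) (fst w) + cinner (snd z) (snd w)"

definition orth_proj :: "('b::chilbert_space \<times> 'a::chilbert_space) set \<Rightarrow> 'b \<times> 'a \<Rightarrow> 'b \<times> 'a" where
  "orth_proj M z = (THE p. p \<in> M \<and> (\<forall>m\<in>M. pinner (z - p) m = 0))"

definition gap ::
  "'a::chilbert_space set \<Rightarrow> ('a \<Rightarrow> 'b::chilbert_space) \<Rightarrow> 'a set \<Rightarrow> ('a \<Rightarrow> 'b) \<Rightarrow> real" where
  "gap DA A DB B = onorm (\<lambda>z. orth_proj (graph DA A) z - orth_proj (graph DB B) z)"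

end

theory Submission
  imports Defs
begin

text \<open>Let \<open>m = m(T) > 0\<close> and pick a unit vector \<open>x0 \<in> D\<close> with \<open>N = \<parallel>T x0\<parallel>\<close> close to \<open>m\<close>.
Write \<open>x = \<alpha> x0 + v\<close> with \<open>v \<perp> x0\<close> (\<open>coord\<close> and \<open>perp\<close> below) and put \<open>T' = T \<circ> R\<close>, where
\<open>R x = (s \<alpha> + \<phi> x) x0 + v\<close>, \<open>s = m / N\<close> and \<open>\<phi> x = - \<langle>T x0, T v\<rangle> / N\<^sup>2\<close> (\<open>corr\<close> below).
The correction \<open>\<phi>\<close> makes \<open>T x0\<close> orthogonal to \<open>T (\<phi> x0 + v)\<close>, hence
\<open>\<parallel>T' x\<parallel>\<^sup>2 = m\<^sup>2 |\<alpha>|\<^sup>2 + \<parallel>T (\<phi> x0 + v)\<parallel>\<^sup>2 \<ge> m\<^sup>2 \<parallel>x\<parallel>\<^sup>2\<close>, while \<open>\<parallel>T' x0\<parallel> = s N = m\<close>: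
\<open>T'\<close> attains its minimum modulus at \<open>x0\<close>.

Since \<open>R\<close> is a bijection of \<open>D\<close> changing only the \<open>x0\<close>-coordinate, the graphs of \<open>T\<close> and
\<open>T'\<close> are matched point by point up to a multiple of \<open>(0, x0)\<close>. Near-minimality of \<open>x0\<close>
gives \<open>|\<langle>T x0, T v\<rangle>|\<^sup>2 \<le> (N\<^sup>2 - m\<^sup>2) \<parallel>T v\<parallel>\<^sup>2\<close> for \<open>v \<perp> x0\<close>, which makes that multiple
small relative to the graph norm; and if each of two closed subspaces is relatively
\<open>\<eta>\<close>-close to the other, their orthogonal projections differ by at most \<open>\<eta>\<close> in norm.\<close>

section \<open>Complex inner product spaces\<close>

declare scaleC_one [simp]

lemma scaleC_zero_left [simp]: "(0::complex) *\<^sub>C (x::'a::chilbert_space) = 0"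
  by (metis scaleR_scaleC scaleR_zero_left of_real_0)

lemma scaleC_zero_right [simp]: "a *\<^sub>C (0::'a::chilbert_space) = 0"
proof -
  have "a *\<^sub>C (0::'a) = a *\<^sub>C 0 + a *\<^sub>C 0" by (metis add_0 scaleC_add_right)
  then show ?thesis by simp
qed

lemma scaleC_minus_left: "(- a) *\<^sub>C (x::'a::chilbert_space) = - (a *\<^sub>C x)"
proof -
  have "a *\<^sub>C x + (- a) *\<^sub>C x = 0" by (metis scaleC_add_left add.right_inverse scaleC_zero_left)
  then show ?thesis by (simp add: eq_neg_iff_add_eq_0 add.commute)
qed

lemma scaleC_minus_right: "a *\<^sub>C (- x::'a::chilbert_space) = - (a *\<^sub>C x)"
proof -
  have "a *\<^sub>C x + a *\<^sub>C (- x) = 0" by (metis scaleC_add_right add.right_inverse scaleC_zero_right)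
  then show ?thesis by (simp add: eq_neg_iff_add_eq_0 add.commute)
qed

lemma scaleC_diff_right: "a *\<^sub>C (x - y::'a::chilbert_space) = a *\<^sub>C x - a *\<^sub>C y"
  by (metis diff_conv_add_uminus scaleC_add_right scaleC_minus_right)

lemma scaleC_diff_left: "(a - b) *\<^sub>C (x::'a::chilbert_space) = a *\<^sub>C x - b *\<^sub>C x"
  by (metis diff_conv_add_uminus scaleC_add_left scaleC_minus_left)

lemma cinner_zero_left [simp]: "cinner (0::'a::chilbert_space) y = 0"
proof -
  have "cinner (0::'a) y = cinner 0 y + cinner 0 y" by (metis add_0 cinner_add_left)
  then show ?thesis by simp
qed

lemma cinner_zero_right [simp]: "cinner (x::'a::chilbert_space) 0 = 0"
  by (metis cinner_commute cinner_zero_left complex_cnj_zero)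

lemma cinner_add_right: "cinner (x::'a::chilbert_space) (y + z) = cinner x y + cinner x z"
  by (metis cinner_commute cinner_add_left complex_cnj_add)

lemma cinner_scaleC_right: "cinner (x::'a::chilbert_space) (a *\<^sub>C y) = a * cinner x y"
  by (metis cinner_commute cinner_scaleC_left complex_cnj_cnj complex_cnj_mult)

lemma cinner_minus_left: "cinner (- x::'a::chilbert_space) y = - cinner x y"
  using cinner_scaleC_left[of "-1" x y] by (simp add: scaleC_minus_left)

lemma cinner_minus_right: "cinner (x::'a::chilbert_space) (- y) = - cinner x y"
  using cinner_scaleC_right[of x "-1" y] by (simp add: scaleC_minus_left)

lemma cinner_diff_left: "cinner (x - y::'a::chilbert_space) z = cinner x z - cinner y z"
  by (simp only: diff_conv_add_uminus cinner_add_left cinner_minus_left)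

lemma cinner_diff_right: "cinner (x::'a::chilbert_space) (y - z) = cinner x y - cinner x z"
  by (simp only: diff_conv_add_uminus cinner_add_right cinner_minus_right)

lemma cinner_eq_zero_sym: "cinner (x::'a::chilbert_space) y = 0 \<Longrightarrow> cinner y x = 0"
  by (metis cinner_commute complex_cnj_zero)

lemma cinner_self: "cinner (x::'a::chilbert_space) x = complex_of_real ((norm x)^2)"
proof -
  have "Im (cinner x x) = 0" using arg_cong[OF cinner_commute[of x x], of Im] by simp
  moreover have "Re (cinner x x) = (norm x)^2"
    using norm_eq_sqrt_cinner[of x] cinner_ge_zero[of x] by simp
  ultimately show ?thesis by (simp add: complex_eq_iff)
qed

lemma Re_cinner_self: "Re (cinner (x::'a::chilbert_space) x) = (norm x)^2"
  by (simp add: cinner_self)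

lemma norm_scaleC: "norm (a *\<^sub>C (x::'a::chilbert_space)) = cmod a * norm x"
proof -
  have "(norm (a *\<^sub>C x))^2 = Re (cnj a * a * cinner x x)"
    by (simp add: Re_cinner_self[symmetric] cinner_scaleC_left cinner_scaleC_right mult_ac)
  also have "\<dots> = (cmod a * norm x)^2"
    by (simp only: cinner_self complex_mult_cnj mult.commute)
      (simp add: mult.commute cmod_power2 power_mult_distrib)
  finally show ?thesis by (simp add: power2_eq_iff_nonneg)
qed

lemma norm_add_sq:
  "(norm (x + y::'a::chilbert_space))^2 = (norm x)^2 + (norm y)^2 + 2 * Re (cinner x y)"
proof -
  have "Re (cinner y x) = Re (cinner x y)" by (metis cinner_commute complex_cnj_cnj cnj.simps(1))
  then show ?thesis
    by (simp add: Re_cinner_self[symmetric] cinner_add_left cinner_add_right)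
qed

lemma norm_diff_sq:
  "(norm (x - y::'a::chilbert_space))^2 = (norm x)^2 + (norm y)^2 - 2 * Re (cinner x y)"
  using norm_add_sq[of x "- y"] by (simp add: cinner_minus_right)

lemma norm_add_sq_orth:
  "cinner x y = 0 \<Longrightarrow> (norm (x + y::'a::chilbert_space))^2 = (norm x)^2 + (norm y)^2"
  by (simp add: norm_add_sq)

lemma discriminant_le_of_nonneg:
  fixes A B C :: real
  assumes "C \<ge> 0" and nonneg: "\<And>t. 0 \<le> A - 2 * B * t + C * t^2"
  shows "B^2 \<le> A * C"
proof (cases "C = 0")
  case True
  have "B = 0"
  proof (rule ccontr)
    assume "B \<noteq> 0"
    have "0 \<le> A - 2 * B * ((A + 1) / (2 * B))" using nonneg[of "(A+1)/(2*B)"] True by simp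
    also have "\<dots> = -1" using \<open>B \<noteq> 0\<close> by (simp add: field_simps)
    finally show False by simp
  qed
  then show ?thesis using True by simp
next
  case False
  then have C: "C > 0" using assms(1) by simp
  have "0 \<le> A - 2 * B * (B / C) + C * (B / C)^2" by (rule nonneg)
  also have "\<dots> = A - B^2 / C" using C by (simp add: field_simps power2_eq_square)
  finally show ?thesis using C by (simp add: field_simps)
qed

lemma Re_cinner_le: "Re (cinner x y) \<le> norm (x::'a::chilbert_space) * norm y"
proof -
  have "(Re (cinner x y))^2 \<le> (norm x)^2 * (norm y)^2"
  proof (rule discriminant_le_of_nonneg)
    fix t :: real
    have "0 \<le> (norm (x - t *\<^sub>R y))^2" by simp
    also have "\<dots> = (norm x)^2 - 2 * Re (cinner x y) * t + (norm y)^2 * t^2"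
      by (simp add: norm_diff_sq scaleR_scaleC cinner_scaleC_right norm_scaleC
          power_mult_distrib mult_ac)
    finally show "0 \<le> (norm x)^2 - 2 * Re (cinner x y) * t + (norm y)^2 * t^2" .
  qed simp
  then have "\<bar>Re (cinner x y)\<bar> \<le> norm x * norm y"
    by (metis abs_le_square_iff abs_mult abs_norm_cancel power_mult_distrib)
  then show ?thesis by simp
qed

lemma norm_cinner_le: "cmod (cinner x y) \<le> norm (x::'a::chilbert_space) * norm y"
proof (cases "cinner x y = 0")
  case False
  let ?c = "cinner x y"
  have "(cmod ?c)^2 = Re (cinner (?c *\<^sub>C x) y)"
    using cmod_power2[of ?c] by (simp add: cinner_scaleC_left power2_eq_square)
  also have "\<dots> \<le> cmod ?c * (norm x * norm y)"
    using Re_cinner_le[of "?c *\<^sub>C x" y] by (simp add: norm_scaleC)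
  finally show ?thesis using False by (simp add: power2_eq_square)
qed simp

lemma bounded_linear_cinner_right: "bounded_linear (\<lambda>x. cinner (a::'a::chilbert_space) x)"
proof (rule bounded_linear_intro[where K = "norm a"])
  show "cmod (cinner a x) \<le> norm x * norm a" for x
    using norm_cinner_le[of a x] by (simp add: mult.commute)
qed (simp_all add: cinner_add_right scaleR_scaleC cinner_scaleC_right scaleR_conv_of_real)

lemma bounded_linear_scaleC_left: "bounded_linear (\<lambda>c. c *\<^sub>C (a::'a::chilbert_space))"
  by (rule bounded_linear_intro[where K = "norm a"])
    (simp_all add: scaleC_add_left scaleR_scaleC scaleC_scaleC scaleR_conv_of_real norm_scaleC)

instantiation prod :: (chilbert_space, chilbert_space) chilbert_space
begin

definition scaleC_prod_def: "scaleC c z = (c *\<^sub>C fst z, c *\<^sub>C snd z)"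

definition cinner_prod_def: "cinner z w = cinner (fst z) (fst w) + cinner (snd z) (snd w)"

instance
proof
  fix a b :: complex and x y z :: "'a \<times> 'b" and r :: real
  show "a *\<^sub>C (x + y) = a *\<^sub>C x + a *\<^sub>C y" by (simp add: scaleC_prod_def scaleC_add_right)
  show "(a + b) *\<^sub>C x = a *\<^sub>C x + b *\<^sub>C x" by (simp add: scaleC_prod_def scaleC_add_left)
  show "a *\<^sub>C b *\<^sub>C x = (a * b) *\<^sub>C x" by (simp add: scaleC_prod_def scaleC_scaleC)
  show "1 *\<^sub>C x = x" by (simp add: scaleC_prod_def)
  show "r *\<^sub>R x = complex_of_real r *\<^sub>C x"
    by (simp add: scaleC_prod_def scaleR_scaleC scaleR_prod_def)
  show "cinner (x + y) z = cinner x z + cinner y z" by (simp add: cinner_prod_def cinner_add_left)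
  show "cinner (a *\<^sub>C x) y = cnj a * cinner x y"
    by (simp add: cinner_prod_def scaleC_prod_def cinner_scaleC_left distrib_left)
  show "cinner x y = cnj (cinner y x)" by (metis cinner_prod_def cinner_commute complex_cnj_add)
  show "0 \<le> Re (cinner x x)" by (simp add: cinner_prod_def Re_cinner_self)
  show "norm x = sqrt (Re (cinner x x))" by (simp add: cinner_prod_def Re_cinner_self norm_prod_def)
qed

end

lemma pinner_eq_cinner: "pinner z w = cinner z w"
  by (simp add: pinner_def cinner_prod_def)

lemma csubspace_zero: "csubspace M \<Longrightarrow> 0 \<in> M"
  by (simp add: csubspace_def)

lemma csubspace_add: "csubspace M \<Longrightarrow> x \<in> M \<Longrightarrow> y \<in> M \<Longrightarrow> x + y \<in> M"
  by (simp add: csubspace_def)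

lemma csubspace_scaleC: "csubspace M \<Longrightarrow> x \<in> M \<Longrightarrow> c *\<^sub>C x \<in> M"
  by (simp add: csubspace_def)

lemma csubspace_scaleR: "csubspace (M::'a::chilbert_space set) \<Longrightarrow> x \<in> M \<Longrightarrow> r *\<^sub>R x \<in> M"
  by (simp add: csubspace_scaleC scaleR_scaleC)

lemma csubspace_diff:
  "csubspace (M::'a::chilbert_space set) \<Longrightarrow> x \<in> M \<Longrightarrow> y \<in> M \<Longrightarrow> x - y \<in> M"
  using csubspace_add[of M x "- y"] csubspace_scaleR[of M y "-1"] by simp

section \<open>Orthogonal projections\<close>

lemma parallelogram_law:
  "(norm (x - y::'a::chilbert_space))^2 + (norm (x + y))^2 = 2 * (norm x)^2 + 2 * (norm y)^2"
  by (simp add: norm_add_sq norm_diff_sq)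

text \<open>The midpoint of \<open>a\<close> and \<open>b\<close> lies in \<open>M\<close>, so it is no closer to \<open>z\<close> than \<open>d\<close>.\<close>

lemma norm_diff_sq_le_near_points:
  fixes M :: "'a::chilbert_space set"
  assumes "csubspace M" "a \<in> M" "b \<in> M" and "0 \<le> d" and dist_ge: "\<And>q. q \<in> M \<Longrightarrow> d \<le> norm (z - q)"
  shows "(norm (a - b))^2 \<le> 2 * (norm (z - a))^2 + 2 * (norm (z - b))^2 - 4 * d^2"
proof -
  have "(1/2::real) *\<^sub>R (a + b) \<in> M" using assms by (intro csubspace_scaleR csubspace_add)
  then have "2 * d \<le> 2 * norm (z - (1/2::real) *\<^sub>R (a + b))" using dist_ge by simp
  also have "\<dots> = norm ((z - a) + (z - b))"
    using norm_scaleR[of 2 "z - (1/2::real) *\<^sub>R (a + b)"]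
    by (simp add: algebra_simps scaleR_2)
  finally have "4 * d^2 \<le> (norm ((z - a) + (z - b)))^2"
    using \<open>0 \<le> d\<close> power_mono[of "2 * d" _ 2] by (simp add: power_mult_distrib)
  moreover have "a - b = (z - b) - (z - a)" by simp
  ultimately show ?thesis
    using parallelogram_law[of "z - b" "z - a"] by (simp add: add.commute)
qed

lemma Cauchy_minimizing_sequence:
  fixes M :: "'a::chilbert_space set"
  assumes "csubspace M" and "0 \<le> d" and d_le: "\<And>q. q \<in> M \<Longrightarrow> d \<le> norm (z - q)"
    and pM: "\<And>n. p n \<in> M" and p_near: "\<And>n. (norm (z - p n))^2 < d^2 + 1 / real (Suc n)"
  shows "Cauchy p"
proof (rule metric_CauchyI)
  fix e :: real assume "e > 0"
  then obtain K where K: "inverse (real (Suc K)) < e^2 / 4"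
    using reals_Archimedean[of "e^2 / 4"] by auto
  have "dist (p i) (p j) < e" if "K \<le> i" "K \<le> j" for i j
  proof -
    have "(dist (p i) (p j))^2 < 2 / real (Suc i) + 2 / real (Suc j)"
      using norm_diff_sq_le_near_points[OF assms(1) pM pM \<open>0 \<le> d\<close> d_le, of i j]
        p_near[of i] p_near[of j]
      by (simp add: dist_norm)
    also have "\<dots> \<le> 2 / real (Suc K) + 2 / real (Suc K)"
      using that by (intro add_mono divide_left_mono) auto
    also have "\<dots> = 4 * inverse (real (Suc K))" by (simp add: inverse_eq_divide)
    also have "\<dots> < e^2" using K by simp
    finally show ?thesis using \<open>e > 0\<close> by (simp add: power_less_imp_less_base)
  qed
  then show "\<exists>K. \<forall>i\<ge>K. \<forall>j\<ge>K. dist (p i) (p j) < e" by blast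
qed

lemma nearest_point_exists:
  fixes M :: "'a::chilbert_space set"
  assumes sub: "csubspace M" and cl: "closed M"
  shows "\<exists>p\<in>M. \<forall>q\<in>M. norm (z - p) \<le> norm (z - q)"
proof -
  define d where "d = Inf ((\<lambda>q. norm (z - q)) ` M)"
  have ne: "(\<lambda>q. norm (z - q)) ` M \<noteq> {}" using csubspace_zero[OF sub] by auto
  have d_le: "d \<le> norm (z - q)" if "q \<in> M" for q
    unfolding d_def using that by (intro cInf_lower bdd_belowI[of _ 0]) auto
  have d0: "0 \<le> d" unfolding d_def using ne by (auto intro: cInf_greatest)
  have "\<exists>p\<in>M. (norm (z - p))^2 < d^2 + 1 / real (Suc n)" for n
  proof -
    let ?r = "sqrt (d^2 + 1 / real (Suc n))"
    have "d < ?r" using d0 by (intro real_less_rsqrt) simp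
    then obtain p where "p \<in> M" "norm (z - p) < ?r" using cInf_lessD[OF ne] by (auto simp: d_def)
    then have "(norm (z - p))^2 < ?r^2" by (intro power_strict_mono) auto
    then show ?thesis using \<open>p \<in> M\<close> by auto
  qed
  then obtain p where pM: "\<And>n. p n \<in> M"
    and p_near: "\<And>n. (norm (z - p n))^2 < d^2 + 1 / real (Suc n)"
    by metis
  obtain P where lim: "p \<longlonglongrightarrow> P"
    using Cauchy_minimizing_sequence[OF sub d0 d_le pM p_near] Cauchy_convergent_iff convergent_def
    by blast
  have "(norm (z - P))^2 \<le> d^2 + 0"
  proof (rule LIMSEQ_le)
    show "(\<lambda>n. (norm (z - p n))^2) \<longlonglongrightarrow> (norm (z - P))^2" by (intro tendsto_intros lim)
    show "(\<lambda>n. d^2 + 1 / real (Suc n)) \<longlonglongrightarrow> d^2 + 0"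
      by (intro tendsto_intros LIMSEQ_inverse_real_of_nat[unfolded inverse_eq_divide])
  qed (use p_near less_imp_le in blast)
  then have "norm (z - P) \<le> d" using d0 by (simp add: power2_le_iff_abs_le)
  moreover have "P \<in> M" using closed_sequentially[OF cl] pM lim by blast
  ultimately show ?thesis using d_le by (meson order_trans)
qed

lemma nearest_point_orthogonal:
  fixes M :: "'a::chilbert_space set"
  assumes sub: "csubspace M" and "p \<in> M" and nearest: "\<And>q. q \<in> M \<Longrightarrow> norm (z - p) \<le> norm (z - q)"
    and "q \<in> M"
  shows "cinner (z - p) q = 0"
proof -
  have Re_zero: "Re (cinner (z - p) q) = 0" if "q \<in> M" for q
  proof -
    have "(Re (cinner (z - p) q))^2 \<le> 0 * (norm q)^2"
    proof (rule discriminant_le_of_nonneg)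
      fix t :: real
      have "p + t *\<^sub>R q \<in> M" using sub \<open>p \<in> M\<close> that by (intro csubspace_add csubspace_scaleR)
      then have "norm (z - p) \<le> norm ((z - p) - t *\<^sub>R q)"
        using nearest by (simp add: diff_diff_add)
      then have "(norm (z - p))^2 \<le> (norm ((z - p) - t *\<^sub>R q))^2"
        by (simp add: power_mono)
      also have "\<dots> = (norm (z - p))^2 + t^2 * (norm q)^2 - 2 * t * Re (cinner (z - p) q)"
        by (simp add: norm_diff_sq scaleR_scaleC cinner_scaleC_right norm_scaleC power_mult_distrib)
      finally show "0 \<le> 0 - 2 * Re (cinner (z - p) q) * t + (norm q)^2 * t^2"
        by (simp add: algebra_simps)
    qed simp
    then show ?thesis by simp
  qed
  have "\<i> *\<^sub>C q \<in> M" using sub \<open>q \<in> M\<close> by (rule csubspace_scaleC)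
  then have "Im (cinner (z - p) q) = 0" using Re_zero[of "\<i> *\<^sub>C q"] by (simp add: cinner_scaleC_right)
  then show ?thesis using Re_zero[OF \<open>q \<in> M\<close>] by (simp add: complex_eq_iff)
qed

definition cproj :: "'a::chilbert_space set \<Rightarrow> 'a \<Rightarrow> 'a" where
  "cproj M z = (THE p. p \<in> M \<and> (\<forall>q\<in>M. cinner (z - p) q = 0))"

lemma orth_proj_eq_cproj: "orth_proj M = cproj M"
  by (simp add: fun_eq_iff orth_proj_def cproj_def pinner_eq_cinner)

lemma orthogonal_decomposition_unique:
  fixes M :: "'a::chilbert_space set"
  assumes sub: "csubspace M" and "p \<in> M" "\<forall>m\<in>M. cinner (z - p) m = 0"
    and "q \<in> M" "\<forall>m\<in>M. cinner (z - q) m = 0"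
  shows "p = q"
proof -
  have "p - q \<in> M" using assms by (intro csubspace_diff)
  then have "cinner ((z - q) - (z - p)) (p - q) = 0" using assms by (simp add: cinner_diff_left)
  then have "cinner (p - q) (p - q) = 0" by simp
  then show ?thesis unfolding cinner_self by simp
qed

lemma
  fixes M :: "'a::chilbert_space set"
  assumes sub: "csubspace M" and cl: "closed M"
  shows cproj_in: "cproj M z \<in> M"
    and cproj_orthogonal: "m \<in> M \<Longrightarrow> cinner (z - cproj M z) m = 0"
proof -
  obtain p where "p \<in> M" and "\<forall>q\<in>M. norm (z - p) \<le> norm (z - q)"
    using nearest_point_exists[OF sub cl] by blast
  then have "p \<in> M \<and> (\<forall>m\<in>M. cinner (z - p) m = 0)"
    using nearest_point_orthogonal[OF sub] by blast
  then have "\<exists>!p. p \<in> M \<and> (\<forall>m\<in>M. cinner (z - p) m = 0)"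
    using orthogonal_decomposition_unique[OF sub] by blast
  then have "cproj M z \<in> M \<and> (\<forall>m\<in>M. cinner (z - cproj M z) m = 0)"
    unfolding cproj_def by (rule theI')
  then show "cproj M z \<in> M" "m \<in> M \<Longrightarrow> cinner (z - cproj M z) m = 0" by auto
qed

lemma cproj_diff:
  fixes M :: "'a::chilbert_space set"
  assumes sub: "csubspace M" and cl: "closed M"
  shows "cproj M (x - y) = cproj M x - cproj M y"
proof (rule orthogonal_decomposition_unique[OF sub])
  show "cproj M (x - y) \<in> M" "\<forall>m\<in>M. cinner (x - y - cproj M (x - y)) m = 0"
    using cproj_in[OF sub cl] cproj_orthogonal[OF sub cl] by auto
  show "cproj M x - cproj M y \<in> M" using cproj_in[OF sub cl] sub by (intro csubspace_diff)
  have "x - y - (cproj M x - cproj M y) = (x - cproj M x) - (y - cproj M y)" by simp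
  then show "\<forall>m\<in>M. cinner (x - y - (cproj M x - cproj M y)) m = 0"
    using cproj_orthogonal[OF sub cl, of _ x] cproj_orthogonal[OF sub cl, of _ y]
    by (simp only: cinner_diff_left) simp
qed

lemma norm_sub_cproj_le:
  fixes M :: "'a::chilbert_space set"
  assumes sub: "csubspace M" and cl: "closed M" and "a \<in> M"
  shows "norm (b - cproj M b) \<le> norm (b - a)"
proof -
  have "cproj M b - a \<in> M" using cproj_in[OF sub cl] \<open>a \<in> M\<close> sub by (intro csubspace_diff)
  then have "(norm ((b - cproj M b) + (cproj M b - a)))^2
      = (norm (b - cproj M b))^2 + (norm (cproj M b - a))^2"
    by (intro norm_add_sq_orth cproj_orthogonal[OF sub cl])
  then have "(norm (b - a))^2 = (norm (b - cproj M b))^2 + (norm (cproj M b - a))^2"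
    by simp
  then have "(norm (b - cproj M b))^2 \<le> (norm (b - a))^2" by simp
  then show ?thesis by (simp add: power2_le_iff_abs_le)
qed

text \<open>Test \<open>cproj M w\<close> against its approximant in \<open>N\<close>, to which \<open>w\<close> is orthogonal.\<close>

lemma norm_cproj_of_orthogonal_le:
  fixes M N :: "'a::chilbert_space set"
  assumes sub: "csubspace M" and cl: "closed M" and "\<eta> \<ge> 0"
    and approx: "\<And>a. a \<in> M \<Longrightarrow> \<exists>b\<in>N. norm (a - b) \<le> \<eta> * norm a"
    and orth: "\<And>b. b \<in> N \<Longrightarrow> cinner w b = 0"
  shows "norm (cproj M w) \<le> \<eta> * norm w"
proof -
  let ?p = "cproj M w"
  obtain b where "b \<in> N" and b: "norm (?p - b) \<le> \<eta> * norm ?p"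
    using approx[OF cproj_in[OF sub cl]] by auto
  have "cinner (w - ?p) ?p = 0" using cproj_orthogonal[OF sub cl cproj_in[OF sub cl]] .
  then have "(norm ?p)^2 = Re (cinner w (?p - b))"
    using orth[OF \<open>b \<in> N\<close>] by (simp add: cinner_diff_left cinner_diff_right Re_cinner_self)
  also have "\<dots> \<le> norm w * (\<eta> * norm ?p)"
    using Re_cinner_le[of w "?p - b"] b by (meson mult_left_mono norm_ge_zero order_trans)
  finally have "norm ?p * norm ?p \<le> norm ?p * (\<eta> * norm w)" by (simp add: power2_eq_square mult_ac)
  then show ?thesis using \<open>\<eta> \<ge> 0\<close> by (cases "norm ?p = 0") auto
qed

text \<open>Splitting \<open>z = (z - Q z) + Q z\<close>, the difference \<open>P z - Q z\<close> is the sum of the orthogonal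
vectors \<open>P (z - Q z)\<close> and \<open>P (Q z) - Q z\<close>, each of which is controlled by one of the two
approximation hypotheses.\<close>

lemma norm_cproj_diff_le:
  fixes M N :: "'a::chilbert_space set"
  assumes subM: "csubspace M" and clM: "closed M" and subN: "csubspace N" and clN: "closed N"
    and "\<eta> \<ge> 0"
    and MN: "\<And>a. a \<in> M \<Longrightarrow> \<exists>b\<in>N. norm (a - b) \<le> \<eta> * norm a"
    and NM: "\<And>b. b \<in> N \<Longrightarrow> \<exists>a\<in>M. norm (b - a) \<le> \<eta> * norm b"
  shows "norm (cproj M z - cproj N z) \<le> \<eta> * norm z"
proof -
  let ?P = "cproj M"
  define b where "b = cproj N z"
  define w where "w = z - b"
  have "b \<in> N" using cproj_in[OF subN clN] b_def by auto
  have w_orth: "cinner w n = 0" if "n \<in> N" for n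
    using cproj_orthogonal[OF subN clN that] w_def b_def by auto
  have Pw: "norm (?P w) \<le> \<eta> * norm w"
    using norm_cproj_of_orthogonal_le[OF subM clM \<open>\<eta> \<ge> 0\<close> MN w_orth] .
  have Pb: "norm (b - ?P b) \<le> \<eta> * norm b"
    using NM[OF \<open>b \<in> N\<close>] norm_sub_cproj_le[OF subM clM] by (meson order_trans)
  have decomp: "?P z - cproj N z = ?P w - (b - ?P b)"
    using cproj_diff[OF subM clM, of z b] by (simp add: w_def b_def)
  have "cinner (?P w) (b - ?P b) = 0"
    using cproj_orthogonal[OF subM clM cproj_in[OF subM clM]] by (rule cinner_eq_zero_sym)
  then have "(norm (?P z - cproj N z))^2 = (norm (?P w))^2 + (norm (b - ?P b))^2"
    by (simp only: decomp norm_diff_sq) simp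
  also have "\<dots> \<le> (\<eta> * norm w)^2 + (\<eta> * norm b)^2"
    using Pw Pb by (intro add_mono power_mono) auto
  also have "\<dots> = (\<eta> * norm z)^2"
    using norm_add_sq_orth[of w b] w_orth[OF \<open>b \<in> N\<close>] by (simp add: w_def power_mult_distrib algebra_simps)
  finally show ?thesis using \<open>\<eta> \<ge> 0\<close> by (simp add: power2_le_iff_abs_le)
qed

section \<open>Closed operators and their graphs\<close>

lemma densely_defined_closedD:
  assumes "densely_defined_closed D T"
  shows "csubspace D" "closure D = UNIV"
    "\<And>x y. x \<in> D \<Longrightarrow> y \<in> D \<Longrightarrow> T (x + y) = T x + T y"
    "\<And>c x. x \<in> D \<Longrightarrow> T (c *\<^sub>C x) = c *\<^sub>C T x" "closed (graph D T)"
  using assms unfolding densely_defined_closed_def by auto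

lemma densely_defined_closed_zero:
  "densely_defined_closed D T \<Longrightarrow> T 0 = 0"
  using densely_defined_closedD(4)[of D T 0 0] densely_defined_closedD(1) csubspace_zero by force

lemma densely_defined_closed_diff:
  fixes T :: "'a::chilbert_space \<Rightarrow> 'b::chilbert_space"
  assumes "densely_defined_closed D T" "x \<in> D" "y \<in> D"
  shows "T (x - y) = T x - T y"
proof -
  note d = densely_defined_closedD[OF assms(1)]
  have "T (- y) = - T y" using d(4)[OF assms(3), of "-1"] by (simp add: scaleC_minus_left)
  moreover have "- y \<in> D" using csubspace_scaleR[OF d(1) assms(3), of "-1"] by simp
  ultimately show ?thesis using d(3)[OF assms(2) \<open>- y \<in> D\<close>] by simp
qed

lemma mem_graph_iff: "(y, x) \<in> graph D T \<longleftrightarrow> x \<in> D \<and> y = T x"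
  by (auto simp: graph_def)

lemma csubspace_graph:
  fixes D :: "'a::chilbert_space set" and T :: "'a \<Rightarrow> 'b::chilbert_space"
  assumes "densely_defined_closed D T"
  shows "csubspace (graph D T)"
proof -
  note d = densely_defined_closedD[OF assms]
  have "0 \<in> graph D T"
    using csubspace_zero[OF d(1)] densely_defined_closed_zero[OF assms]
    by (simp add: zero_prod_def mem_graph_iff)
  moreover have "\<forall>z\<in>graph D T. \<forall>w\<in>graph D T. z + w \<in> graph D T"
    unfolding graph_def using d(3) csubspace_add[OF d(1)] by fastforce
  moreover have "\<forall>c. \<forall>z\<in>graph D T. c *\<^sub>C z \<in> graph D T"
    unfolding graph_def using d(4) csubspace_scaleC[OF d(1)] by (fastforce simp: scaleC_prod_def)
  ultimately show ?thesis unfolding csubspace_def by blast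
qed

lemma gap_le_of_graph_approx:
  fixes D D' :: "'a::chilbert_space set" and T T' :: "'a \<Rightarrow> 'b::chilbert_space"
  assumes A: "densely_defined_closed D T" and B: "densely_defined_closed D' T'" and "\<eta> \<ge> 0"
    and AB: "\<And>x. x \<in> D \<Longrightarrow> \<exists>x'\<in>D'. norm ((T x, x) - (T' x', x')) \<le> \<eta> * norm (T x, x)"
    and BA: "\<And>x'. x' \<in> D' \<Longrightarrow> \<exists>x\<in>D. norm ((T' x', x') - (T x, x)) \<le> \<eta> * norm (T' x', x')"
  shows "gap D T D' T' \<le> \<eta>"
  unfolding gap_def orth_proj_eq_cproj
proof (rule onorm_bound[OF \<open>\<eta> \<ge> 0\<close>])
  fix z :: "'b \<times> 'a"
  show "norm (cproj (graph D T) z - cproj (graph D' T') z) \<le> \<eta> * norm z"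
  proof (rule norm_cproj_diff_le[OF csubspace_graph[OF A] densely_defined_closedD(5)[OF A]
        csubspace_graph[OF B] densely_defined_closedD(5)[OF B] \<open>\<eta> \<ge> 0\<close>])
    fix a assume "a \<in> graph D T"
    then obtain x where "x \<in> D" "a = (T x, x)" unfolding graph_def by auto
    then show "\<exists>b\<in>graph D' T'. norm (a - b) \<le> \<eta> * norm a"
      using AB[OF \<open>x \<in> D\<close>] unfolding graph_def by blast
  next
    fix b assume "b \<in> graph D' T'"
    then obtain x where "x \<in> D'" "b = (T' x, x)" unfolding graph_def by auto
    then show "\<exists>a\<in>graph D T. norm (b - a) \<le> \<eta> * norm b"
      using BA[OF \<open>x \<in> D'\<close>] unfolding graph_def by blast
  qed
qed

lemma bounded_below_closed_preimage_convergent: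
  fixes T :: "'a::chilbert_space \<Rightarrow> 'b::chilbert_space"
  assumes ddc: "densely_defined_closed D T" and "m > 0"
    and low: "\<And>x. x \<in> D \<Longrightarrow> m * norm x \<le> norm (T x)"
    and uD: "\<And>n. u n \<in> D" and lim: "(\<lambda>n. T (u n)) \<longlonglongrightarrow> y"
  obtains u0 where "u0 \<in> D" "u \<longlonglongrightarrow> u0" "T u0 = y"
proof -
  have "Cauchy u"
  proof (rule metric_CauchyI)
    fix e :: real assume "e > 0"
    obtain K where K: "\<And>i j. K \<le> i \<Longrightarrow> K \<le> j \<Longrightarrow> dist (T (u i)) (T (u j)) < e * m"
      using metric_CauchyD[OF LIMSEQ_imp_Cauchy[OF lim], of "e * m"] \<open>e > 0\<close> \<open>m > 0\<close> by auto
    have "dist (u i) (u j) < e" if "K \<le> i" "K \<le> j" for i j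
    proof -
      have "m * dist (u i) (u j) \<le> dist (T (u i)) (T (u j))"
        using low[OF csubspace_diff[OF densely_defined_closedD(1)[OF ddc] uD uD]]
        by (simp add: dist_norm densely_defined_closed_diff[OF ddc uD uD])
      then have "m * dist (u i) (u j) < m * e" using K[OF that] by (simp add: mult.commute)
      then show ?thesis using \<open>m > 0\<close> by simp
    qed
    then show "\<exists>K. \<forall>i\<ge>K. \<forall>j\<ge>K. dist (u i) (u j) < e" by blast
  qed
  then obtain u0 where "u \<longlonglongrightarrow> u0" using Cauchy_convergent_iff convergent_def by blast
  have "(y, u0) \<in> graph D T"
  proof (rule closed_sequentially[OF densely_defined_closedD(5)[OF ddc]])
    show "(T (u n), u n) \<in> graph D T" for n using uD by (simp add: mem_graph_iff)
    show "(\<lambda>n. (T (u n), u n)) \<longlonglongrightarrow> (y, u0)" by (intro tendsto_Pair lim \<open>u \<longlonglongrightarrow> u0\<close>)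
  qed
  then show ?thesis using that \<open>u \<longlonglongrightarrow> u0\<close> by (auto simp: mem_graph_iff)
qed

lemma infinite_dimensional_nontrivial:
  assumes "infinite_dimensional TYPE('a::chilbert_space)"
  shows "\<exists>x::'a. x \<noteq> 0"
proof (rule ccontr)
  assume "\<not> (\<exists>x::'a. x \<noteq> 0)"
  moreover have "(0::'a) \<in> cspan {}"
    unfolding cspan_def by (rule CollectI, rule exI[of _ "{}"], rule exI[of _ "\<lambda>_. 0"]) simp
  ultimately have "cspan ({}::'a set) = UNIV" by (metis UNIV_eq_I)
  then show False using assms unfolding infinite_dimensional_def by blast
qed

lemma dense_csubspace_has_unit_vector:
  fixes D :: "'a::chilbert_space set"
  assumes "\<exists>x::'a. x \<noteq> 0" and sub: "csubspace D" and dense: "closure D = UNIV"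
  shows "\<exists>x\<in>D. norm x = 1"
proof -
  have "\<exists>x\<in>D. x \<noteq> 0"
  proof (rule ccontr)
    assume "\<not> (\<exists>x\<in>D. x \<noteq> 0)"
    then have "closure D \<subseteq> {0}" using closure_mono[of D "{0}"] by auto
    then show False using assms(1) dense by auto
  qed
  then obtain x where "x \<in> D" "x \<noteq> 0" by auto
  then have "(1 / norm x) *\<^sub>R x \<in> D" "norm ((1 / norm x) *\<^sub>R x) = 1"
    using csubspace_scaleR[OF sub] by auto
  then show ?thesis by blast
qed

lemma
  fixes T :: "'a::chilbert_space \<Rightarrow> 'b::chilbert_space"
  assumes ddc: "densely_defined_closed D T" and "bounded_below D T"
    and unit: "\<exists>x\<in>D. norm x = 1"
  shows min_modulus_pos: "0 < min_modulus D T"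
    and min_modulus_le: "x \<in> D \<Longrightarrow> min_modulus D T * norm x \<le> norm (T x)"
    and min_modulus_approx: "min_modulus D T < r \<Longrightarrow> \<exists>x\<in>D. norm x = 1 \<and> norm (T x) < r"
proof -
  define S where "S = (\<lambda>x. norm (T x)) ` {x\<in>D. norm x = 1}"
  have m_def: "min_modulus D T = Inf S" by (simp add: min_modulus_def S_def)
  have "S \<noteq> {}" using unit by (auto simp: S_def)
  obtain c where "c > 0" and c: "\<And>x. x \<in> D \<Longrightarrow> c * norm x \<le> norm (T x)"
    using \<open>bounded_below D T\<close> unfolding bounded_below_def by auto
  have "c \<le> Inf S"
  proof (rule cInf_greatest[OF \<open>S \<noteq> {}\<close>])
    fix s assume "s \<in> S"
    then obtain x where "x \<in> D" "norm x = 1" "s = norm (T x)" by (auto simp: S_def)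
    then show "c \<le> s" using c[of x] by simp
  qed
  then show "0 < min_modulus D T" using \<open>c > 0\<close> by (simp add: m_def)
  show "min_modulus D T * norm x \<le> norm (T x)" if "x \<in> D"
  proof (cases "x = 0")
    case True then show ?thesis by (simp add: densely_defined_closed_zero[OF ddc])
  next
    case False
    have "(1 / norm x) *\<^sub>R x \<in> D" using csubspace_scaleR[OF densely_defined_closedD(1)[OF ddc] that] .
    moreover have "T ((1 / norm x) *\<^sub>R x) = (1 / norm x) *\<^sub>R T x"
      using densely_defined_closedD(4)[OF ddc that] by (simp add: scaleR_scaleC)
    ultimately have "norm (T x) / norm x \<in> S" using False by (force simp: S_def)
    then have "Inf S \<le> norm (T x) / norm x" by (intro cInf_lower bdd_belowI[of _ 0]) (auto simp: S_def)
    then show ?thesis using False by (simp add: m_def field_simps)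
  qed
  show "\<exists>x\<in>D. norm x = 1 \<and> norm (T x) < r" if "min_modulus D T < r"
    using cInf_lessD[OF \<open>S \<noteq> {}\<close>, of r] that by (auto simp: m_def S_def)
qed

section \<open>A minimum attaining perturbation\<close>

text \<open>Here \<open>m\<close> is any lower bound of \<open>T\<close>; \<open>T'\<close> attains its minimum modulus \<open>m\<close> at
\<open>x0\<close> in any case, and its distance to \<open>T\<close> is governed by \<open>\<kappa>\<close>, which is small when \<open>x0\<close>
nearly attains \<open>m\<close>.\<close>

locale min_attaining_perturbation =
  fixes D :: "'a::chilbert_space set" and T :: "'a \<Rightarrow> 'b::chilbert_space"
    and x0 :: 'a and m :: real
  assumes ddc: "densely_defined_closed D T"
    and x0_in: "x0 \<in> D" and norm_x0: "norm x0 = 1"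
    and m_pos: "m > 0" and m_le_norm_T: "\<And>x. x \<in> D \<Longrightarrow> m * norm x \<le> norm (T x)"
begin

abbreviation "N \<equiv> norm (T x0)"

definition "s = m / N"

definition "\<kappa> = sqrt (N^2 - m^2)"

definition "coord x = cinner x0 x"

definition "perp x = x - coord x *\<^sub>C x0"

definition "corr x = - cinner (T x0) (T (perp x)) / complex_of_real (N^2)"

definition "R x = (complex_of_real s * coord x + corr x) *\<^sub>C x0 + perp x"

definition "T' x = T (R x)"

lemma csubspace_D: "csubspace D"
  using densely_defined_closedD(1)[OF ddc] .

lemma T_add: "x \<in> D \<Longrightarrow> y \<in> D \<Longrightarrow> T (x + y) = T x + T y"
  using densely_defined_closedD(3)[OF ddc] .

lemma T_scaleC: "x \<in> D \<Longrightarrow> T (c *\<^sub>C x) = c *\<^sub>C T x"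
  using densely_defined_closedD(4)[OF ddc] .

lemma scaleC_x0_add_in: "w \<in> D \<Longrightarrow> c *\<^sub>C x0 + w \<in> D"
  using csubspace_D x0_in by (intro csubspace_add csubspace_scaleC)

lemma T_scaleC_x0_add: "w \<in> D \<Longrightarrow> T (c *\<^sub>C x0 + w) = c *\<^sub>C T x0 + T w"
  using csubspace_D x0_in by (simp add: T_add T_scaleC csubspace_scaleC)

lemma m_le_N: "m \<le> N"
  using m_le_norm_T[OF x0_in] norm_x0 by simp

lemma N_pos: "N > 0"
  using m_le_N m_pos by linarith

lemma s_pos: "s > 0"
  using N_pos m_pos by (simp add: s_def)

lemma s_le_1: "s \<le> 1"
  using N_pos m_le_N by (simp add: s_def)

lemma s_mult_N: "s * N = m"
  using N_pos by (simp add: s_def)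

lemma N_minus_m_le_kappa: "N - m \<le> \<kappa>"
proof -
  have "(N - m)^2 \<le> N^2 - m^2"
    using m_le_N m_pos by (simp add: power2_eq_square algebra_simps mult_right_mono)
  then show ?thesis unfolding \<kappa>_def by (rule real_le_rsqrt)
qed

lemma cinner_x0_x0: "cinner x0 x0 = 1"
  using norm_x0 by (simp add: cinner_self)

lemma cinner_Tx0_Tx0: "cinner (T x0) (T x0) = complex_of_real (N^2)"
  by (simp add: cinner_self)

lemma perp_in: "x \<in> D \<Longrightarrow> perp x \<in> D"
  unfolding perp_def using csubspace_D x0_in by (intro csubspace_diff csubspace_scaleC)

lemma coord_perp: "coord (perp x) = 0"
  by (simp add: perp_def coord_def cinner_diff_right cinner_scaleC_right cinner_x0_x0)

lemma coord_scaleC_x0_add: "coord (c *\<^sub>C x0 + w) = c + coord w"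
  by (simp add: coord_def cinner_add_right cinner_scaleC_right cinner_x0_x0)

lemma perp_scaleC_x0_add: "perp (c *\<^sub>C x0 + w) = perp w"
  by (simp add: perp_def coord_scaleC_x0_add scaleC_add_left)

lemma coord_perp_decomp: "coord x *\<^sub>C x0 + perp x = x"
  by (simp add: perp_def)

lemma norm_diff_eq_coord: "perp x = perp y \<Longrightarrow> norm (x - y) = cmod (coord x - coord y)"
  by (metis coord_perp_decomp add_diff_cancel_right scaleC_diff_left norm_scaleC norm_x0 mult_1_right)

lemma norm_coord_le: "cmod (coord x) \<le> norm x"
  using norm_cinner_le[of x0 x] norm_x0 by (simp add: coord_def)

lemma norm_sq_coord_perp: "(norm x)^2 = (cmod (coord x))^2 + (norm (perp x))^2"
proof -
  have "cinner (coord x *\<^sub>C x0) (perp x) = 0"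
    using coord_perp by (simp add: cinner_scaleC_left coord_def)
  then show ?thesis
    using norm_add_sq_orth[of "coord x *\<^sub>C x0" "perp x"] by (simp add: coord_perp_decomp norm_scaleC norm_x0)
qed

lemma R_in: "x \<in> D \<Longrightarrow> R x \<in> D"
  unfolding R_def by (intro scaleC_x0_add_in perp_in)

lemma coord_R: "coord (R x) = complex_of_real s * coord x + corr x"
  by (simp add: R_def coord_scaleC_x0_add coord_perp)

lemma perp_perp: "perp (perp x) = perp x"
  by (simp add: perp_def[of "perp x"] coord_perp)

lemma perp_R: "perp (R x) = perp x"
  by (simp add: R_def perp_scaleC_x0_add perp_perp)

lemma T'_eq: "x \<in> D \<Longrightarrow> T' x = (complex_of_real s * coord x + corr x) *\<^sub>C T x0 + T (perp x)"
  unfolding T'_def R_def by (simp add: T_scaleC_x0_add perp_in)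

lemma T_perp: "x \<in> D \<Longrightarrow> T (perp x) = T x - coord x *\<^sub>C T x0"
  using T_scaleC_x0_add[OF perp_in, of x "coord x"] by (simp add: coord_perp_decomp)

lemma cinner_Tx0_corr: "cinner (T x0) (corr x *\<^sub>C T x0 + T (perp x)) = 0"
  using N_pos by (simp add: cinner_add_right cinner_scaleC_right cinner_Tx0_Tx0 corr_def)

lemma cinner_Tx0_T: "z \<in> D \<Longrightarrow> cinner (T x0) (T z) = complex_of_real (N^2) * (coord z - corr z)"
  using cinner_Tx0_corr[of z] T_perp[of z]
  by (simp add: cinner_add_right cinner_diff_right cinner_scaleC_right cinner_Tx0_Tx0 algebra_simps)

lemma cinner_Tx0_T': "x \<in> D \<Longrightarrow> cinner (T x0) (T' x) = complex_of_real (N^2 * s) * coord x"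
  unfolding T'_def using cinner_Tx0_T[OF R_in] by (simp add: coord_R perp_R corr_def algebra_simps)

lemma R_eqI:
  assumes "z \<in> D" and "perp x = perp z"
    and "cinner (T x0) (T z) = complex_of_real (N^2 * s) * coord x"
  shows "R x = z"
proof -
  have "corr x = corr z" using assms(2) by (simp add: corr_def)
  moreover have "complex_of_real s * coord x = coord z - corr z"
    using assms(3) cinner_Tx0_T[OF assms(1)] N_pos by (simp add: mult.assoc)
  ultimately show ?thesis using assms(2) coord_perp_decomp[of z] by (simp add: R_def)
qed

lemma T'_bounded_below:
  assumes "x \<in> D"
  shows "m * norm x \<le> norm (T' x)"
proof -
  define w where "w = corr x *\<^sub>C x0 + perp x"
  have "w \<in> D" by (simp add: w_def scaleC_x0_add_in perp_in assms)
  have Tw: "T w = corr x *\<^sub>C T x0 + T (perp x)"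
    by (simp add: w_def T_scaleC_x0_add perp_in assms)
  have "(norm (perp x))^2 \<le> (norm w)^2"
    using norm_sq_coord_perp[of w] by (simp add: w_def perp_scaleC_x0_add perp_perp)
  then have "m * norm (perp x) \<le> norm (T w)"
    using m_le_norm_T[OF \<open>w \<in> D\<close>] m_pos power2_le_imp_le[of "norm (perp x)" "norm w"]
    by (meson mult_left_mono norm_ge_zero less_imp_le order_trans)
  moreover have "norm ((complex_of_real s * coord x) *\<^sub>C T x0) = m * cmod (coord x)"
    using s_pos s_mult_N by (simp add: norm_scaleC norm_mult)
  ultimately have "(m * cmod (coord x))^2 + (m * norm (perp x))^2
      \<le> (norm ((complex_of_real s * coord x) *\<^sub>C T x0))^2 + (norm (T w))^2"
    using m_pos by (simp add: power_mono)
  then have "(m * norm x)^2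
      \<le> (norm ((complex_of_real s * coord x) *\<^sub>C T x0))^2 + (norm (T w))^2"
    by (simp only: power_mult_distrib norm_sq_coord_perp[of x] distrib_left)
  also have "\<dots> = (norm (T' x))^2"
    using norm_add_sq_orth[of "(complex_of_real s * coord x) *\<^sub>C T x0" "T w"] cinner_Tx0_corr[of x]
    by (simp add: T'_eq[OF assms] Tw cinner_scaleC_left scaleC_add_left add.assoc)
  finally show ?thesis using m_pos by (simp add: power2_le_iff_abs_le)
qed

lemma norm_T'_x0: "norm (T' x0) = m"
proof -
  have "coord x0 = 1" "perp x0 = 0" by (simp_all add: coord_def perp_def cinner_x0_x0)
  moreover have "T 0 = 0" using densely_defined_closed_zero[OF ddc] .
  ultimately have "T' x0 = complex_of_real s *\<^sub>C T x0" by (simp add: T'_eq[OF x0_in] corr_def)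
  then show ?thesis using s_mult_N s_pos by (simp add: norm_scaleC)
qed

lemma min_modulus_T': "min_modulus D T' = m"
  unfolding min_modulus_def
proof (rule cInf_eq_minimum)
  show "m \<in> (\<lambda>x. norm (T' x)) ` {x \<in> D. norm x = 1}"
    using x0_in norm_x0 norm_T'_x0 by force
  show "\<And>y. y \<in> (\<lambda>x. norm (T' x)) ` {x \<in> D. norm x = 1} \<Longrightarrow> m \<le> y"
    using T'_bounded_below by force
qed

lemma minimum_attaining_T': "minimum_attaining D T'"
  unfolding minimum_attaining_def using x0_in norm_x0 norm_T'_x0 min_modulus_T' by auto

lemma coord_add: "coord (x + y) = coord x + coord y"
  by (simp add: coord_def cinner_add_right)

lemma coord_scaleC: "coord (c *\<^sub>C x) = c * coord x"
  by (simp add: coord_def cinner_scaleC_right)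

lemma perp_add: "perp (x + y) = perp x + perp y"
  by (simp add: perp_def coord_add scaleC_add_left algebra_simps)

lemma perp_scaleC: "perp (c *\<^sub>C x) = c *\<^sub>C perp x"
  by (simp add: perp_def coord_scaleC scaleC_diff_right scaleC_scaleC)

lemma corr_add: "x \<in> D \<Longrightarrow> y \<in> D \<Longrightarrow> corr (x + y) = corr x + corr y"
  by (simp add: corr_def perp_add T_add perp_in cinner_add_right diff_divide_distrib)

lemma corr_scaleC: "x \<in> D \<Longrightarrow> corr (c *\<^sub>C x) = c * corr x"
  by (simp add: corr_def perp_scaleC T_scaleC perp_in cinner_scaleC_right)

lemma R_add: "x \<in> D \<Longrightarrow> y \<in> D \<Longrightarrow> R (x + y) = R x + R y"
  by (simp add: R_def coord_add corr_add perp_add scaleC_add_left distrib_left algebra_simps)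

lemma R_scaleC: "x \<in> D \<Longrightarrow> R (c *\<^sub>C x) = c *\<^sub>C R x"
  by (simp add: R_def coord_scaleC corr_scaleC perp_scaleC scaleC_add_right scaleC_scaleC
      algebra_simps)

lemma T'_add: "x \<in> D \<Longrightarrow> y \<in> D \<Longrightarrow> T' (x + y) = T' x + T' y"
  by (simp add: T'_def R_add T_add R_in)

lemma T'_scaleC: "x \<in> D \<Longrightarrow> T' (c *\<^sub>C x) = c *\<^sub>C T' x"
  by (simp add: T'_def R_scaleC T_scaleC R_in)

lemma tendsto_coord: "f \<longlonglongrightarrow> x \<Longrightarrow> (\<lambda>n. coord (f n)) \<longlonglongrightarrow> coord x"
  unfolding coord_def by (rule bounded_linear.tendsto[OF bounded_linear_cinner_right])

lemma tendsto_perp: "f \<longlonglongrightarrow> x \<Longrightarrow> (\<lambda>n. perp (f n)) \<longlonglongrightarrow> perp x"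
  unfolding perp_def
  by (intro tendsto_diff bounded_linear.tendsto[OF bounded_linear_scaleC_left] tendsto_coord)

text \<open>\<open>R\<close> only changes the \<open>x0\<close>-coordinate; on the graph of \<open>T'\<close> that coordinate is
recovered continuously from the first component, by its inner product with \<open>T x0\<close>.\<close>

lemma closed_graph_T': "closed (graph D T')"
proof (rule closed_sequential_limits[THEN iffD2], intro allI impI, elim conjE)
  fix f and l :: "'b \<times> 'a"
  assume f_graph: "\<forall>n. f n \<in> graph D T'" and "f \<longlonglongrightarrow> l"
  obtain y x where l: "l = (y, x)" by fastforce
  define xs where "xs n = snd (f n)" for n
  have xs_in: "xs n \<in> D" and f_eq: "f n = (T' (xs n), xs n)" for n
    using f_graph[rule_format, of n] unfolding xs_def graph_def by auto
  have T'_lim: "(\<lambda>n. T' (xs n)) \<longlonglongrightarrow> y" and x_lim: "xs \<longlonglongrightarrow> x"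
    using tendsto_fst[OF \<open>f \<longlonglongrightarrow> l\<close>] tendsto_snd[OF \<open>f \<longlonglongrightarrow> l\<close>] by (simp_all add: l f_eq)
  obtain z where "z \<in> D" and R_lim: "(\<lambda>n. R (xs n)) \<longlonglongrightarrow> z" and "T z = y"
    using bounded_below_closed_preimage_convergent[OF ddc m_pos m_le_norm_T,
        of "\<lambda>n. R (xs n)" y] R_in[OF xs_in] T'_lim unfolding T'_def by blast
  have "perp x = perp z"
    using tendsto_perp[OF x_lim] tendsto_perp[OF R_lim] by (simp add: perp_R LIMSEQ_unique)
  moreover have "cinner (T x0) (T z) = complex_of_real (N^2 * s) * coord x"
  proof (rule LIMSEQ_unique)
    show "(\<lambda>n. cinner (T x0) (T' (xs n))) \<longlonglongrightarrow> cinner (T x0) (T z)"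
      using bounded_linear.tendsto[OF bounded_linear_cinner_right T'_lim] \<open>T z = y\<close> by simp
    show "(\<lambda>n. cinner (T x0) (T' (xs n))) \<longlonglongrightarrow> complex_of_real (N^2 * s) * coord x"
      unfolding cinner_Tx0_T'[OF xs_in] by (intro tendsto_mult tendsto_const tendsto_coord x_lim)
  qed
  ultimately have "R x = z" by (rule R_eqI[OF \<open>z \<in> D\<close>])
  moreover have "x \<in> D"
    using scaleC_x0_add_in[OF perp_in[OF \<open>z \<in> D\<close>], of "coord x"] \<open>perp x = perp z\<close>
      coord_perp_decomp[of x] by simp
  ultimately show "l \<in> graph D T'" using \<open>T z = y\<close> by (simp add: l mem_graph_iff T'_def)
qed

lemma densely_defined_closed_T': "densely_defined_closed D T'"
  unfolding densely_defined_closed_def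
  using csubspace_D densely_defined_closedD(2)[OF ddc] T'_add T'_scaleC closed_graph_T' by blast

lemma m_sq_le_norm_T_x0_add_sq:
  assumes "w \<in> D" "coord w = 0"
  shows "m^2 \<le> N^2 + (cmod t)^2 * (norm (T w))^2 + 2 * Re (t * cinner (T x0) (T w))"
proof -
  have "cinner x0 (t *\<^sub>C w) = 0" using assms(2) by (simp add: coord_def cinner_scaleC_right)
  then have "(norm (x0 + t *\<^sub>C w))^2 = 1 + (cmod t)^2 * (norm w)^2"
    by (simp add: norm_add_sq_orth norm_x0 norm_scaleC power_mult_distrib)
  then have "m^2 \<le> (m * norm (x0 + t *\<^sub>C w))^2"
    using m_pos by (simp add: power_mult_distrib)
  also have "\<dots> \<le> (norm (T x0 + t *\<^sub>C T w))^2"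
  proof -
    have "t *\<^sub>C w \<in> D" using csubspace_scaleC[OF csubspace_D assms(1)] .
    then have "x0 + t *\<^sub>C w \<in> D" "T (x0 + t *\<^sub>C w) = T x0 + t *\<^sub>C T w"
      using csubspace_add[OF csubspace_D x0_in] T_add[OF x0_in] T_scaleC[OF assms(1)] by auto
    then show ?thesis using m_le_norm_T[of "x0 + t *\<^sub>C w"] m_pos by (simp add: power_mono)
  qed
  also have "\<dots> = N^2 + (cmod t)^2 * (norm (T w))^2 + 2 * Re (t * cinner (T x0) (T w))"
    by (simp add: norm_add_sq norm_scaleC cinner_scaleC_right power_mult_distrib)
  finally show ?thesis .
qed

text \<open>Since \<open>x0\<close> almost minimises \<open>\<parallel>T x\<parallel>\<close> on the unit sphere, the first-order variation of
\<open>\<parallel>T (x0 + t w)\<parallel>\<^sup>2\<close> in directions \<open>w \<perp> x0\<close> is small; the optimal \<open>t\<close> is a real multiple of the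
conjugate of the inner product below.\<close>

lemma norm_cinner_Tx0_T_sq_le:
  assumes "w \<in> D" "coord w = 0"
  shows "(cmod (cinner (T x0) (T w)))^2 \<le> (N^2 - m^2) * (norm (T w))^2"
proof (cases "cinner (T x0) (T w) = 0")
  case True then show ?thesis using m_le_N m_pos by (simp add: power_mono)
next
  case False
  let ?a = "cinner (T x0) (T w)"
  have "((cmod ?a)^2)^2 \<le> (N^2 - m^2) * ((cmod ?a)^2 * (norm (T w))^2)"
  proof (rule discriminant_le_of_nonneg)
    fix r :: real
    have "cnj ?a * ?a = complex_of_real ((cmod ?a)^2)"
      using complex_norm_square[of ?a] by (simp add: mult.commute)
    then have ta: "- complex_of_real r * cnj ?a * ?a = - complex_of_real (r * (cmod ?a)^2)"
      by (simp add: mult.assoc)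
    have nt: "(cmod (- complex_of_real r * cnj ?a))^2 = r^2 * (cmod ?a)^2"
      by (simp add: norm_mult power_mult_distrib)
    have "m^2 \<le> N^2 + r^2 * (cmod ?a)^2 * (norm (T w))^2 - 2 * (r * (cmod ?a)^2)"
      using m_sq_le_norm_T_x0_add_sq[OF assms, of "- complex_of_real r * cnj ?a"]
      unfolding ta nt by simp
    then show "0 \<le> (N^2 - m^2) - 2 * (cmod ?a)^2 * r + ((cmod ?a)^2 * (norm (T w))^2) * r^2"
      by (simp add: algebra_simps)
  qed simp
  then have "(cmod ?a)^2 * (cmod ?a)^2 \<le> (cmod ?a)^2 * ((N^2 - m^2) * (norm (T w))^2)"
    by (simp add: power2_eq_square[of "(cmod ?a)^2"] algebra_simps)
  moreover have "(cmod ?a)^2 > 0" using False by simp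
  ultimately show ?thesis by (rule mult_left_le_imp_le)
qed

lemma kappa_nonneg: "0 \<le> \<kappa>"
  using m_le_N m_pos by (simp add: \<kappa>_def power_mono)

lemma norm_corr_le: "x \<in> D \<Longrightarrow> cmod (corr x) * N^2 \<le> \<kappa> * norm (T (perp x))"
proof -
  assume "x \<in> D"
  have "(cmod (cinner (T x0) (T (perp x))))^2 \<le> (\<kappa> * norm (T (perp x)))^2"
    using norm_cinner_Tx0_T_sq_le[OF perp_in[OF \<open>x \<in> D\<close>] coord_perp] m_le_N m_pos
    by (simp add: \<kappa>_def power_mult_distrib)
  then have "cmod (cinner (T x0) (T (perp x))) \<le> \<kappa> * norm (T (perp x))"
    by (rule power2_le_imp_le) (simp add: kappa_nonneg)
  then show ?thesis using N_pos by (simp add: corr_def norm_divide norm_power)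
qed

lemma norm_corr_mult_N_le:
  assumes "x \<in> D"
  shows "cmod (corr x) * N \<le> \<kappa> * (1 + 1 / m) * norm (T x, x)"
proof -
  let ?n = "norm (T x, x)"
  have "norm (T (perp x)) \<le> norm (T x) + cmod (coord x) * N"
    using T_perp[OF assms] norm_triangle_ineq4[of "T x" "coord x *\<^sub>C T x0"] by (simp add: norm_scaleC)
  then have "cmod (corr x) * N * N \<le> \<kappa> * (norm (T x) + cmod (coord x) * N)"
    using norm_corr_le[OF assms] kappa_nonneg
    by (simp add: power2_eq_square mult.assoc) (meson mult_left_mono order_trans)
  then have "cmod (corr x) * N \<le> \<kappa> * norm (T x) / N + \<kappa> * cmod (coord x)"
    using N_pos by (simp add: field_simps)
  also have "\<kappa> * norm (T x) / N \<le> \<kappa> * ?n / m"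
    using m_le_N m_pos kappa_nonneg norm_fst_le[of "T x" x]
    by (intro frac_le mult_left_mono) auto
  also have "\<kappa> * cmod (coord x) \<le> \<kappa> * ?n"
    using norm_coord_le[of x] norm_snd_le[of x "T x"] kappa_nonneg by (simp add: mult_left_mono)
  finally show ?thesis by (simp add: algebra_simps)
qed

lemma exists_R_preimage_near:
  assumes "z \<in> D"
  shows "\<exists>x\<in>D. R x = z \<and> norm (z - x) \<le> \<kappa> * (2 * m + 1) / m^2 * norm (T z, z)"
proof -
  let ?n = "norm (T z, z)"
  define c where "c = (coord z - corr z) / complex_of_real s"
  define x where "x = c *\<^sub>C x0 + perp z"
  have "x \<in> D" by (simp add: x_def scaleC_x0_add_in perp_in assms)
  have "perp x = perp z" by (simp add: x_def perp_scaleC_x0_add perp_perp)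
  moreover have "cinner (T x0) (T z) = complex_of_real (N^2 * s) * coord x"
    using s_pos by (simp add: cinner_Tx0_T[OF assms] x_def coord_scaleC_x0_add coord_perp c_def)
  ultimately have "R x = z" by (rule R_eqI[OF assms])
  have eq: "(coord z - c) * complex_of_real s = complex_of_real (s - 1) * coord z + corr z"
    using s_pos by (simp add: c_def field_simps)
  have "cmod (coord z - c) * s = cmod ((coord z - c) * complex_of_real s)"
    using s_pos by (simp add: norm_mult)
  also have "\<dots> = cmod (complex_of_real (s - 1) * coord z + corr z)"
    by (simp only: eq)
  also have "\<dots> \<le> (1 - s) * cmod (coord z) + cmod (corr z)"
    using norm_triangle_ineq[of "complex_of_real (s - 1) * coord z" "corr z"] s_le_1
    by (simp only: norm_mult norm_of_real) simp
  finally have "cmod (coord z - c) * s * N \<le> ((1 - s) * cmod (coord z) + cmod (corr z)) * N"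
    by (rule mult_right_mono) simp
  then have "cmod (coord z - c) * m \<le> (N - m) * cmod (coord z) + cmod (corr z) * N"
    using N_pos by (simp add: s_def field_simps)
  also have "\<dots> \<le> \<kappa> * ?n + \<kappa> * (1 + 1 / m) * ?n"
  proof (rule add_mono)
    show "(N - m) * cmod (coord z) \<le> \<kappa> * ?n"
      using N_minus_m_le_kappa kappa_nonneg norm_coord_le[of z] norm_snd_le[of z "T z"]
      by (intro mult_mono) auto
  qed (rule norm_corr_mult_N_le[OF assms])
  finally have "cmod (coord z - c) \<le> \<kappa> * (2 * m + 1) / m^2 * ?n"
    using m_pos by (simp add: field_simps power2_eq_square)
  moreover have "norm (z - x) = cmod (coord z - c)"
    using norm_diff_eq_coord[of z x] \<open>perp x = perp z\<close>
    by (simp add: x_def coord_scaleC_x0_add coord_perp)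
  ultimately show ?thesis using \<open>x \<in> D\<close> \<open>R x = z\<close> by auto
qed

lemma norm_corr_mult_N_sq_le:
  assumes "x \<in> D" "2 * \<kappa> \<le> m"
  shows "cmod (corr x) * N^2 \<le> 2 * \<kappa> * (1 + m) * norm (T' x, x)"
proof -
  let ?n = "norm (T' x, x)" and ?\<alpha> = "coord x" and ?p = "corr x"
  have "cmod (complex_of_real s * ?\<alpha> + ?p) * N \<le> (s * cmod ?\<alpha> + cmod ?p) * N"
    using norm_triangle_ineq[of "complex_of_real s * ?\<alpha>" ?p] s_pos
    by (intro mult_right_mono) (auto simp: norm_mult)
  also have "\<dots> = m * cmod ?\<alpha> + cmod ?p * N"
    using N_pos by (simp add: s_def field_simps)
  moreover have "T (perp x) = T' x - (complex_of_real s * ?\<alpha> + ?p) *\<^sub>C T x0"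
    using T'_eq[OF assms(1)] by simp
  ultimately have "norm (T (perp x)) \<le> norm (T' x) + m * cmod ?\<alpha> + cmod ?p * N"
    using norm_triangle_ineq4[of "T' x" "(complex_of_real s * ?\<alpha> + ?p) *\<^sub>C T x0"]
    by (simp add: norm_scaleC)
  then have "cmod ?p * N^2 \<le> \<kappa> * (norm (T' x) + m * cmod ?\<alpha>) + \<kappa> * (cmod ?p * N)"
    using norm_corr_le[OF assms(1)] kappa_nonneg
    by (simp add: distrib_left[symmetric]) (meson mult_left_mono order_trans)
  moreover have "\<kappa> * (cmod ?p * N) \<le> cmod ?p * N^2 / 2"
    using assms(2) m_le_N mult_right_mono[of \<kappa> "N / 2" "cmod ?p * N"]
    by (simp add: power2_eq_square mult_ac)
  ultimately have "cmod ?p * N^2 \<le> 2 * \<kappa> * (norm (T' x) + m * cmod ?\<alpha>)" by linarith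
  also have "\<dots> \<le> 2 * \<kappa> * (?n + m * ?n)"
    using norm_fst_le[of "T' x" x] norm_coord_le[of x] norm_snd_le[of x "T' x"] kappa_nonneg m_pos
    by (intro mult_left_mono add_mono) auto
  finally show ?thesis by (simp add: algebra_simps)
qed

lemma norm_sub_R_le:
  assumes "x \<in> D" "2 * \<kappa> \<le> m"
  shows "norm (x - R x) \<le> \<kappa> * (3 * m + 2) / m^2 * norm (T' x, x)"
proof -
  let ?n = "norm (T' x, x)" and ?\<alpha> = "coord x" and ?p = "corr x"
  have "norm (x - R x) = cmod (complex_of_real (1 - s) * ?\<alpha> - ?p)"
    using norm_diff_eq_coord[of x "R x"] by (simp add: perp_R coord_R algebra_simps)
  also have "\<dots> \<le> (1 - s) * cmod ?\<alpha> + cmod ?p"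
    using norm_triangle_ineq4[of "complex_of_real (1 - s) * ?\<alpha>" ?p] s_le_1
    by (simp only: norm_mult norm_of_real)
  finally have "norm (x - R x) * m^2 \<le> ((1 - s) * cmod ?\<alpha> + cmod ?p) * m^2"
    by (rule mult_right_mono) simp
  also have "\<dots> = (1 - s) * m * cmod ?\<alpha> * m + cmod ?p * m^2"
    by (simp add: power2_eq_square algebra_simps)
  also have "(1 - s) * m * cmod ?\<alpha> * m \<le> \<kappa> * ?n * m"
  proof -
    have "(1 - s) * m \<le> (1 - s) * N" using s_le_1 m_le_N by (simp add: mult_left_mono)
    then have "(1 - s) * m \<le> \<kappa>" using s_mult_N N_minus_m_le_kappa by (simp add: algebra_simps)
    then show ?thesis using norm_coord_le[of x] norm_snd_le[of x "T' x"] s_le_1 m_pos kappa_nonneg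
      by (intro mult_right_mono mult_mono) auto
  qed
  also have "cmod ?p * m^2 \<le> 2 * \<kappa> * (1 + m) * ?n"
    using norm_corr_mult_N_sq_le[OF assms] m_le_N m_pos
    by (meson mult_left_mono norm_ge_zero order_trans power_mono less_imp_le)
  finally show ?thesis using m_pos by (simp add: field_simps power2_eq_square)
qed

lemma gap_T_T'_le:
  assumes "2 * \<kappa> \<le> m"
  shows "gap D T D T' \<le> \<kappa> * (3 * m + 2) / m^2"
proof (rule gap_le_of_graph_approx[OF ddc densely_defined_closed_T'])
  show "0 \<le> \<kappa> * (3 * m + 2) / m^2" using kappa_nonneg m_pos by simp
next
  fix z assume "z \<in> D"
  then obtain x where "x \<in> D" "R x = z"
    and near: "norm (z - x) \<le> \<kappa> * (2 * m + 1) / m^2 * norm (T z, z)"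
    using exists_R_preimage_near by blast
  have "\<kappa> * (2 * m + 1) / m^2 \<le> \<kappa> * (3 * m + 2) / m^2"
    using kappa_nonneg m_pos by (simp add: divide_right_mono mult_left_mono)
  then have "norm (z - x) \<le> \<kappa> * (3 * m + 2) / m^2 * norm (T z, z)"
    using near mult_right_mono[OF _ norm_ge_zero] order_trans by blast
  moreover have "norm ((T z, z) - (T' x, x)) = norm (z - x)"
    using \<open>R x = z\<close> by (simp add: T'_def norm_Pair)
  ultimately have "norm ((T z, z) - (T' x, x)) \<le> \<kappa> * (3 * m + 2) / m^2 * norm (T z, z)"
    by simp
  then show "\<exists>x\<in>D. norm ((T z, z) - (T' x, x)) \<le> \<kappa> * (3 * m + 2) / m^2 * norm (T z, z)"
    using \<open>x \<in> D\<close> by blast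
next
  fix x assume "x \<in> D"
  moreover have "norm ((T' x, x) - (T (R x), R x)) = norm (x - R x)"
    by (simp add: T'_def norm_Pair)
  ultimately show "\<exists>z\<in>D. norm ((T' x, x) - (T z, z)) \<le> \<kappa> * (3 * m + 2) / m^2 * norm (T' x, x)"
    using R_in norm_sub_R_le[OF _ assms] by metis
qed

end

theorem theorem3p8:
  fixes D :: "'a::chilbert_space set" and T :: "'a \<Rightarrow> 'b::chilbert_space"
    and \<epsilon> :: real
  assumes "infinite_dimensional TYPE('a)"
    and "infinite_dimensional TYPE('b)"
    and "densely_defined_closed D T"
    and "bounded_below D T"
    and "\<epsilon> > 0"
  shows "\<exists>D' :: 'a set. \<exists>T' :: 'a \<Rightarrow> 'b.
           densely_defined_closed D' T' \<and> minimum_attaining D' T' \<and> gap D T D' T' \<le> \<epsilon>"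
proof -
  have unit: "\<exists>x\<in>D. norm x = 1"
    using dense_csubspace_has_unit_vector[OF infinite_dimensional_nontrivial[OF assms(1)]
        densely_defined_closedD(1,2)[OF assms(3)]] .
  define m where "m = min_modulus D T"
  have "0 < m" and low: "\<And>x. x \<in> D \<Longrightarrow> m * norm x \<le> norm (T x)"
    using min_modulus_pos[OF assms(3,4) unit] min_modulus_le[OF assms(3,4) unit] by (auto simp: m_def)
  define \<gamma> where "\<gamma> = min (m / 2) (\<epsilon> * m^2 / (3 * m + 2))"
  have "0 < \<gamma>" using \<open>0 < m\<close> assms(5) by (simp add: \<gamma>_def)
  have "m < sqrt (m^2 + \<gamma>^2)" using \<open>0 < m\<close> \<open>0 < \<gamma>\<close> by (intro real_less_rsqrt) simp
  then obtain x0 where "x0 \<in> D" "norm x0 = 1" and near: "norm (T x0) < sqrt (m^2 + \<gamma>^2)"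
    using min_modulus_approx[OF assms(3,4) unit] by (auto simp: m_def)
  interpret min_attaining_perturbation D T x0 m
    using assms(3) \<open>x0 \<in> D\<close> \<open>norm x0 = 1\<close> \<open>0 < m\<close> low by unfold_locales
  have "N^2 < (sqrt (m^2 + \<gamma>^2))^2" using near by (intro power_strict_mono) auto
  then have "\<kappa> \<le> \<gamma>" using \<open>0 < \<gamma>\<close> real_sqrt_le_mono[of "N^2 - m^2" "\<gamma>^2"] by (simp add: \<kappa>_def)
  then have "gap D T D T' \<le> \<kappa> * (3 * m + 2) / m^2"
    using gap_T_T'_le by (simp add: \<gamma>_def)
  also have "\<dots> \<le> \<gamma> * (3 * m + 2) / m^2"
    using \<open>\<kappa> \<le> \<gamma>\<close> \<open>0 < m\<close> by (simp add: divide_right_mono)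
  also have "\<dots> \<le> \<epsilon>"
  proof -
    have "\<gamma> \<le> \<epsilon> * m^2 / (3 * m + 2)" by (simp add: \<gamma>_def)
    then show ?thesis using \<open>0 < m\<close> by (simp add: le_divide_eq divide_le_eq)
  qed
  finally show ?thesis using densely_defined_closed_T' minimum_attaining_T' by blast
qed

end
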